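(* For every integer $n\ge 0$ the following identities hold: (i) $\displaystyle\sum_{i=0}^{n}B_i(t)\,U_{n-i}\!\left(-\tfrac{t}{2}\right)=\begin{cases}0 & \text{if } n \text{ is even},\\ B_{\frac{n+1}{2}}(t) & \text{if } n \text{ is odd};\end{cases}$ (ii) $\displaystyle\sum_{i=0}^{n}B_i(t)B_{n-i}(-t)=\begin{cases}B_{\frac{n}{2}}(2-t^{2}) & \text{if } n \text{ is even},\\ 0 & \text{if } n \text{ is odd};\end{cases}$ (iii) as an identity of rational functions of $t$, $$\frac{t^{2}}{t^{4}-1}\sum_{i=0}^{n}\left(t^{2i}-\frac{1}{t^{2i}}\right)B_{n-i}\!\left(-t^{2}-\frac{1}{t^{2}}\right)=\begin{cases}B_{\frac{n}{2}}\!\left(-t^{2}-\frac{1}{t^{2}}\right) & \text{if } n \text{ is even},\\ 0 & \text{if } n \text{ is odd}.\end{cases}$$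
   Context: The Stern polynomials $B_n(t)\in\mathbb{Z}[t]$, $n\ge 0$, are defined by $B_0(t)=0$, $B_1(t)=1$, $B_{2n}(t)=tB_n(t)$ and $B_{2n+1}(t)=B_n(t)+B_{n+1}(t)$ for $n\ge 1$. $U_n(t)$ denotes the Chebyshev polynomial of the second kind, determined by $\frac{1}{1-2tx+x^{2}}=\sum_{n\ge 0}U_n(t)x^{n}$. *)

theory Defs
  imports "HOL-Computational_Algebra.Computational_Algebra"
begin

function stern :: "nat \<Rightarrow> 'a::comm_ring_1 poly" where
  "stern n = (if n = 0 then 0 else if n = 1 then 1
              else if even n then [:0, 1:] * stern (n div 2)
              else stern (n div 2) + stern (n div 2 + 1))"
  by auto
termination
  by (relation "measure id") (auto elim!: oddE)

definition chebU :: "nat \<Rightarrow> real \<Rightarrow> real" where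
  "chebU n t = fps_nth (inverse (1 - fps_const (2 * t) * fps_X + fps_X ^ 2)) n"

end

theory Submission
  imports Defs
begin

(* Work with formal power series in x.  Let A_t(x) = \<Sum> B_n(t) x^n be the generating
   function of the Stern polynomials evaluated at t, let Q_t(x) = 1 + t x + x^2, and
   let E be the dilation f(x) \<mapsto> f(x^2), a ring endomorphism of power series.
   The defining recurrence of B_n is equivalent to the functional equation
       x A_t = Q_t E(A_t).
   (i)   Since 1/Q_t = \<Sum> U_n(-t/2) x^n, the left side of (i) is the n-th coefficient
         of A_t / Q_t = E(A_t)/x, which is B_((n+1)/2)(t) for odd n and 0 otherwise.
   (ii)  With s = 2 - t^2 one has E(Q_s) = Q_t Q_(-t); hence both A_t A_(-t) and
         E(A_s) solve  x^2 F = E(Q_s) E(F).  A solution of this equation is determined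
         by its first three coefficients, which agree, so A_t A_(-t) = E(A_s).
   (iii) For q = t^2 the Chebyshev values at (q + 1/q)/2 have the closed form
         (q - 1/q) U_k = q^(k+1) - q^(-k-1); after this substitution (iii) becomes
         (i) evaluated at -(q + 1/q), with the summation index shifted by one. *)

text \<open>The defining equations of B_n in the form used below; the unfolding equation
  of the function itself is removed from the simplifier since it loops.\<close>

declare stern.simps [simp del]

lemma stern_0 [simp]: "stern 0 = 0"
  by (subst stern.simps) simp

lemma stern_1 [simp]: "stern (Suc 0) = 1"
  by (subst stern.simps) simp

lemma stern_double: "m \<ge> 1 \<Longrightarrow> stern (2 * m) = [:0, 1:] * stern m"
  by (subst stern.simps) auto

lemma stern_double_Suc: "m \<ge> 1 \<Longrightarrow> stern (Suc (2 * m)) = stern m + stern (m + 1)"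
  by (subst stern.simps) auto

section \<open>The dilation f(x) \<mapsto> f(x^2) of power series\<close>

definition dilate2 :: "'a::zero fps \<Rightarrow> 'a fps" where
  "dilate2 f = Abs_fps (\<lambda>n. if even n then f $ (n div 2) else 0)"

lemma dilate2_nth: "dilate2 f $ n = (if even n then f $ (n div 2) else 0)"
  by (simp add: dilate2_def)

lemma dilate2_X: "dilate2 (fps_X :: 'a::semiring_1 fps) = fps_X ^ 2"
  by (rule fps_ext) (auto simp: dilate2_nth fps_X_power_nth elim!: evenE)

lemma dilate2_diff: "dilate2 (f - g :: 'a::ab_group_add fps) = dilate2 f - dilate2 g"
  by (rule fps_ext) (simp add: dilate2_nth)

lemma sum_even_odd_split:
  fixes m :: nat and h :: "nat \<Rightarrow> 'a::comm_monoid_add"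
  shows "(\<Sum>i=0..2*m. h i) = (\<Sum>j=0..m. h (2*j)) + (\<Sum>j<m. h (2*j+1))"
proof (induction m)
  case (Suc m)
  have "(\<Sum>i=0..2 * Suc m. h i) = (\<Sum>i=0..2*m. h i) + h (2*m+1) + h (2*m+2)"
    by (simp add: sum.atLeast0_atMost_Suc add.assoc)
  then show ?case
    using Suc by (simp add: sum.atLeast0_atMost_Suc ac_simps)
qed simp

text \<open>Dilation is multiplicative: the odd coefficients of a product of even series
  vanish, and the even ones are the coefficients of the undilated product.\<close>

lemma dilate2_mult: "dilate2 (f * g :: 'a::comm_semiring_0 fps) = dilate2 f * dilate2 g"
proof (rule fps_ext)
  fix n
  show "dilate2 (f * g) $ n = (dilate2 f * dilate2 g) $ n"
  proof (cases "even n")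
    case True
    then obtain m where n: "n = 2 * m" by auto
    have odd_terms: "(\<Sum>j<m. dilate2 f $ (2*j+1) * dilate2 g $ (2*m - (2*j+1))) = 0"
      by (rule sum.neutral) (simp add: dilate2_nth)
    have even_terms: "dilate2 f $ (2*j) * dilate2 g $ (2*m - 2*j) = f $ j * g $ (m - j)"
      if "j \<in> {0..m}" for j
    proof -
      have "2*m - 2*j = 2*(m - j)" using that by auto
      then show ?thesis by (simp add: dilate2_nth)
    qed
    have "(dilate2 f * dilate2 g) $ n = (\<Sum>i=0..2*m. dilate2 f $ i * dilate2 g $ (2*m - i))"
      by (simp add: fps_mult_nth n)
    also have "\<dots> = (\<Sum>j=0..m. f $ j * g $ (m - j))"
      by (simp only: sum_even_odd_split odd_terms even_terms cong: sum.cong) simp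
    also have "\<dots> = dilate2 (f * g) $ n"
      by (simp add: dilate2_nth n fps_mult_nth)
    finally show ?thesis ..
  next
    case False
    have "odd i \<or> odd (n - i)" if "i \<in> {0..n}" for i
      using False that by auto
    then have "(\<Sum>i=0..n. dilate2 f $ i * dilate2 g $ (n - i)) = 0"
      by (intro sum.neutral) (auto simp: dilate2_nth)
    then show ?thesis
      using False by (simp add: dilate2_nth fps_mult_nth)
  qed
qed

section \<open>The generating function of the Stern polynomials\<close>

definition stern_gf :: "'a::comm_ring_1 \<Rightarrow> 'a fps" where
  "stern_gf t = Abs_fps (\<lambda>n. poly (stern n) t)"

definition quad :: "'a::comm_ring_1 \<Rightarrow> 'a fps" where
  "quad t = 1 + fps_const t * fps_X + fps_X ^ 2"

lemma quad_mult_nth: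
  "(quad t * f) $ n = f $ n + t * (if n = 0 then 0 else f $ (n - 1)) + (if n < 2 then 0 else f $ (n - 2))"
  by (simp add: quad_def distrib_right mult.assoc fps_X_power_mult_nth)

lemma quad_nth: "quad t $ n = (if n = 0 then 1 else if n = 1 then t else if n = 2 then 1 else 0)"
  by (simp add: quad_def)

lemma stern_gf_functional_eq: "fps_X * stern_gf t = quad t * dilate2 (stern_gf t)"
proof (rule fps_ext)
  fix n
  have "n = 0 \<or> (\<exists>m. n = Suc (2 * m)) \<or> (\<exists>m. n = Suc (Suc (2 * m)))"
    by presburger
  then consider "n = 0" | m where "n = Suc (2 * m)" | m where "n = Suc (Suc (2 * m))"
    by blast
  then show "(fps_X * stern_gf t) $ n = (quad t * dilate2 (stern_gf t)) $ n"
  proof cases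
    case (2 m)
    then show ?thesis
      by (cases "m = 0") (simp_all add: quad_mult_nth dilate2_nth stern_gf_def stern_double)
  next
    case (3 m)
    then show ?thesis
      by (cases "m = 0") (simp_all add: quad_mult_nth dilate2_nth stern_gf_def stern_double_Suc)
  qed (simp add: quad_mult_nth dilate2_nth stern_gf_def)
qed

section \<open>Identity (i): convolution with Chebyshev polynomials\<close>

text \<open>Dividing the functional equation by x Q_t: the quotient A_t / Q_t is the series
  E(A_t) / x, whose n-th coefficient is B_((n+1)/2)(t) for odd n and 0 for even n.\<close>

lemma stern_gf_div_quad_nth:
  fixes t :: "'a::field"
  shows "(stern_gf t * inverse (quad t)) $ n = (if even n then 0 else poly (stern ((n + 1) div 2)) t)"
proof -
  have "fps_X * (stern_gf t * inverse (quad t)) = quad t * inverse (quad t) * dilate2 (stern_gf t)"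
    by (simp only: mult.assoc [symmetric] stern_gf_functional_eq) (simp only: ac_simps)
  also have "\<dots> = dilate2 (stern_gf t)"
    by (simp add: quad_def inverse_mult_eq_1')
  finally have "(fps_X * (stern_gf t * inverse (quad t))) $ Suc n = dilate2 (stern_gf t) $ Suc n"
    by (rule arg_cong)
  then show ?thesis
    by (simp add: dilate2_nth stern_gf_def)
qed

lemma chebU_minus_half: "chebU n (- t / 2) = inverse (quad t) $ n"
proof -
  have "1 - fps_const (2 * (- t / 2)) * fps_X + fps_X ^ 2 = quad t"
    by (simp add: quad_def fps_const_neg [symmetric] del: fps_const_neg)
  then show ?thesis
    by (simp add: chebU_def)
qed

lemma stern_chebU_convolution:
  fixes t :: real
  shows "(\<Sum>i=0..n. poly (stern i) t * chebU (n - i) (- t / 2)) =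
     (if even n then 0 else poly (stern ((n + 1) div 2)) t)"
proof -
  have "(\<Sum>i=0..n. poly (stern i) t * chebU (n - i) (- t / 2)) = (stern_gf t * inverse (quad t)) $ n"
    unfolding chebU_minus_half by (simp add: fps_mult_nth stern_gf_def)
  then show ?thesis
    by (simp add: stern_gf_div_quad_nth)
qed

section \<open>Identity (ii): the product A_t A_(-t)\<close>

lemma dilate2_quad: "dilate2 (quad (2 - t ^ 2)) = quad t * quad (- t :: 'a::comm_ring_1)"
proof (rule fps_ext)
  fix n :: nat
  consider "n \<le> 4" | "n \<ge> 5" by linarith
  then show "dilate2 (quad (2 - t ^ 2)) $ n = (quad t * quad (- t)) $ n"
  proof cases
    case 1
    then consider "n = 0" | "n = 1" | "n = 2" | "n = 3" | "n = 4" by linarith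
    then show ?thesis
      by cases (simp_all add: quad_mult_nth quad_nth dilate2_nth power2_eq_square)
  next
    case 2
    then have "odd n \<or> n div 2 > 2" by auto
    with 2 show ?thesis
      by (auto simp: quad_mult_nth quad_nth dilate2_nth)
  qed
qed

text \<open>A series F with x^2 F = P E(F) is determined by its first three coefficients:
  the coefficient of x^(n+2) on the right only involves coefficients of F of index
  at most (n+2)/2 < n once n > 2.\<close>

lemma dilation_equation_unique:
  fixes F G P :: "'a::comm_ring_1 fps"
  assumes F: "fps_X ^ 2 * F = P * dilate2 F" and G: "fps_X ^ 2 * G = P * dilate2 G"
    and initial: "\<And>k. k \<le> 2 \<Longrightarrow> F $ k = G $ k"
  shows "F = G"
proof -
  define H where "H = F - G"
  have H: "fps_X ^ 2 * H = P * dilate2 H"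
    using F G by (simp add: H_def dilate2_diff right_diff_distrib)
  have "H $ n = 0" for n
  proof (induction n rule: less_induct)
    case (less n)
    show ?case
    proof (cases "n \<le> 2")
      case True
      then show ?thesis using initial by (simp add: H_def)
    next
      case False
      have dilate2_vanishes: "dilate2 H $ (n + 2 - i) = 0" for i
        using False less by (auto simp: dilate2_nth)
      have "H $ n = (fps_X ^ 2 * H) $ (n + 2)"
        by (simp add: fps_X_power_mult_nth)
      also have "\<dots> = (\<Sum>i=0..n+2. P $ i * dilate2 H $ (n + 2 - i))"
        by (simp add: H fps_mult_nth)
      also have "\<dots> = 0"
        by (intro sum.neutral ballI) (simp only: dilate2_vanishes mult_zero_right)
      finally show ?thesis .
    qed
  qed
  then show ?thesis
    by (simp add: H_def fps_eq_iff)
qed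

text \<open>With s = 2 - t^2, both A_t A_(-t) and E(A_s) solve x^2 F = E(Q_s) E(F), and
  both start 0 + 0 x + x^2.\<close>

lemma stern_gf_product:
  fixes t :: "'a::comm_ring_1"
  shows "stern_gf t * stern_gf (- t) = dilate2 (stern_gf (2 - t ^ 2))"
proof (rule dilation_equation_unique [where P = "dilate2 (quad (2 - t ^ 2))"])
  have "fps_X ^ 2 * (stern_gf t * stern_gf (- t)) =
        (fps_X * stern_gf t) * (fps_X * stern_gf (- t))"
    by (simp add: power2_eq_square ac_simps)
  also have "\<dots> = (quad t * quad (- t)) * (dilate2 (stern_gf t) * dilate2 (stern_gf (- t)))"
    by (simp add: stern_gf_functional_eq ac_simps)
  also have "\<dots> = dilate2 (quad (2 - t ^ 2)) * dilate2 (stern_gf t * stern_gf (- t))"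
    by (simp add: dilate2_quad dilate2_mult)
  finally show "fps_X ^ 2 * (stern_gf t * stern_gf (- t)) =
                dilate2 (quad (2 - t ^ 2)) * dilate2 (stern_gf t * stern_gf (- t))" .
next
  let ?s = "2 - t ^ 2"
  have "fps_X ^ 2 * dilate2 (stern_gf ?s) = dilate2 (fps_X * stern_gf ?s)"
    by (simp add: dilate2_mult dilate2_X)
  also have "\<dots> = dilate2 (quad ?s) * dilate2 (dilate2 (stern_gf ?s))"
    by (simp add: stern_gf_functional_eq dilate2_mult)
  finally show "fps_X ^ 2 * dilate2 (stern_gf ?s) = dilate2 (quad ?s) * dilate2 (dilate2 (stern_gf ?s))" .
next
  fix k :: nat
  assume "k \<le> 2"
  then consider "k = 0" | "k = 1" | "k = 2" by linarith
  then show "(stern_gf t * stern_gf (- t)) $ k = dilate2 (stern_gf (2 - t ^ 2)) $ k"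
    by cases (simp_all add: fps_mult_nth stern_gf_def dilate2_nth numeral_2_eq_2 sum.atLeast0_atMost_Suc)
qed

lemma stern_self_convolution:
  fixes t :: "'a::comm_ring_1"
  shows "(\<Sum>i=0..n. poly (stern i) t * poly (stern (n - i)) (- t)) =
           (if even n then poly (stern (n div 2)) (2 - t ^ 2) else 0)"
proof -
  have "(\<Sum>i=0..n. poly (stern i) t * poly (stern (n - i)) (- t)) = (stern_gf t * stern_gf (- t)) $ n"
    by (simp add: fps_mult_nth stern_gf_def)
  also have "\<dots> = dilate2 (stern_gf (2 - t ^ 2)) $ n"
    by (simp only: stern_gf_product)
  finally show ?thesis
    by (simp add: dilate2_nth stern_gf_def)
qed

section \<open>Identity (iii): Chebyshev polynomials at (q + 1/q)/2\<close>

text \<open>The three-term recurrence of U_n, read off from (1 - 2 w x + x^2) \<cdot> \<Sum> U_n(w) x^n = 1.\<close>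

lemma chebU_coeff_equation:
  "chebU k w - 2 * w * (if k = 0 then 0 else chebU (k - 1) w) + (if k < 2 then 0 else chebU (k - 2) w)
     = (if k = 0 then 1 else 0)"
proof -
  define R :: "real fps" where "R = 1 - fps_const (2 * w) * fps_X + fps_X ^ 2"
  have "R * inverse R = 1"
    by (rule inverse_mult_eq_1') (simp add: R_def)
  moreover have "(R * inverse R) $ k = inverse R $ k - 2 * w * (if k = 0 then 0 else inverse R $ (k - 1))
                   + (if k < 2 then 0 else inverse R $ (k - 2))"
    unfolding R_def by (simp add: algebra_simps mult.assoc fps_X_power_mult_nth)
  ultimately show ?thesis
    by (simp add: chebU_def R_def [symmetric])
qed

lemma chebU_0: "chebU 0 w = 1"
  using chebU_coeff_equation [of 0 w] by simp

lemma chebU_1: "chebU 1 w = 2 * w"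
  using chebU_coeff_equation [of 1 w] by (simp add: chebU_0)

lemma chebU_Suc_Suc: "chebU (k + 2) w = 2 * w * chebU (k + 1) w - chebU k w"
  using chebU_coeff_equation [of "k + 2" w] by simp

text \<open>Closed form on the curve w = (q + 1/q)/2, the analogue of U_k(cos x) sin x = sin((k+1)x).\<close>

lemma chebU_closed_form:
  fixes q :: real
  assumes "q \<noteq> 0"
  shows "(q - 1 / q) * chebU k ((q + 1 / q) / 2) = q ^ (k + 1) - 1 / q ^ (k + 1)"
proof -
  let ?w = "(q + 1 / q) / 2"
  let ?P = "\<lambda>k. (q - 1 / q) * chebU k ?w = q ^ (k + 1) - 1 / q ^ (k + 1)"
  have "?P k \<and> ?P (k + 1)"
  proof (induction k)
    case 0
    have "(q - 1 / q) * chebU 1 ?w = (q - 1 / q) * (q + 1 / q)"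
      by (simp only: chebU_1) simp
    also have "\<dots> = q ^ (1 + 1) - 1 / q ^ (1 + 1)"
      by (simp add: algebra_simps power2_eq_square)
    finally show ?case
      by (simp add: chebU_0)
  next
    case (Suc k)
    define p where "p = q ^ (k + 1)"
    have p: "p \<noteq> 0" "q ^ (k + 2) = q * p" "q ^ (k + 3) = q * q * p"
      using assms by (simp_all add: p_def numeral_3_eq_3)
    have "(q - 1 / q) * chebU (k + 2) ?w
          = (q + 1 / q) * ((q - 1 / q) * chebU (k + 1) ?w) - (q - 1 / q) * chebU k ?w"
    proof -
      have "2 * ?w = q + 1 / q" by simp
      then show ?thesis
        unfolding chebU_Suc_Suc by (simp only: right_diff_distrib mult.left_commute)
    qed
    also have "\<dots> = (q + 1 / q) * (q * p - 1 / (q * p)) - (p - 1 / p)"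
      using Suc.IH p by (simp add: p_def)
    also have "\<dots> = q * q * p - 1 / (q * q * p)"
      using p assms by (simp add: field_simps)
    finally have "(q - 1 / q) * chebU (k + 2) ?w = q ^ (k + 3) - 1 / q ^ (k + 3)"
      by (simp only: p(3))
    then have "?P (k + 2)"
      by (simp add: numeral_3_eq_3)
    with Suc.IH show ?case
      by simp
  qed
  then show ?thesis ..
qed

text \<open>After the substitution q = t^2 each weight of (iii) is a Chebyshev value at
  (q + 1/q)/2 = -u/2, where u = -q - 1/q is the argument of the Stern polynomials.\<close>

lemma weight_eq_chebU:
  fixes t :: real
  assumes "t \<noteq> 0" "t ^ 4 \<noteq> 1" "i \<ge> 1"
  shows "t ^ 2 / (t ^ 4 - 1) * (t ^ (2 * i) - 1 / t ^ (2 * i)) =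
           chebU (i - 1) (- (- (t ^ 2) - 1 / t ^ 2) / 2)"
proof -
  define q where "q = t ^ 2"
  have q0: "q \<noteq> 0" and q_sq: "q * q - 1 \<noteq> 0"
    using assms(1,2) by (simp_all add: q_def power_mult [symmetric] flip: power_add)
  have prefactor: "t ^ 2 / (t ^ 4 - 1) = 1 / (q - 1 / q)"
  proof -
    have "t ^ 4 = q * q" by (simp add: q_def flip: power_add)
    then show ?thesis
      using q0 q_sq by (simp add: q_def [symmetric] field_simps)
  qed
  have "q - 1 / q \<noteq> 0"
    using q0 q_sq by (simp add: field_simps)
  then have "chebU (i - 1) ((q + 1 / q) / 2) = (q ^ i - 1 / q ^ i) / (q - 1 / q)"
    using chebU_closed_form [OF q0, of "i - 1"] assms(3) by (simp add: eq_divide_eq ac_simps)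
  moreover have "t ^ (2 * i) = q ^ i" "- (- (t ^ 2) - 1 / t ^ 2) / 2 = (q + 1 / q) / 2"
    by (simp_all add: q_def power_mult)
  ultimately show ?thesis
    by (simp only: prefactor) simp
qed

lemma stern_chebU_shifted_convolution:
  fixes u :: real
  shows "(\<Sum>i=0..n. (if i = 0 then 0 else chebU (i - 1) (- u / 2)) * poly (stern (n - i)) u) =
           (if even n then poly (stern (n div 2)) u else 0)"
proof (cases n)
  case (Suc m)
  have "(\<Sum>i=0..n. (if i = 0 then 0 else chebU (i - 1) (- u / 2)) * poly (stern (n - i)) u)
      = (\<Sum>j=0..m. chebU j (- u / 2) * poly (stern (m - j)) u)"
    unfolding Suc by (simp only: sum.atLeast_Suc_atMost [OF le0] sum.shift_bounds_cl_Suc_ivl) simp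
  also have "\<dots> = (\<Sum>j=0..m. poly (stern j) u * chebU (m - j) (- u / 2))"
    by (subst sum.atLeastAtMost_rev) (auto intro!: sum.cong)
  also have "\<dots> = (if even n then poly (stern (n div 2)) u else 0)"
    using stern_chebU_convolution [where n = m and t = u] Suc by (auto elim!: oddE)
  finally show ?thesis .
qed simp

text \<open>Identity (iii): the weights become shifted Chebyshev values and (i) applies.\<close>

lemma stern_reciprocal_convolution:
  fixes t :: real
  assumes "t \<noteq> 0" "t ^ 4 \<noteq> 1"
  shows "t ^ 2 / (t ^ 4 - 1) *
           (\<Sum>i=0..n. (t ^ (2 * i) - 1 / t ^ (2 * i)) * poly (stern (n - i)) (- (t ^ 2) - 1 / t ^ 2)) =
         (if even n then poly (stern (n div 2)) (- (t ^ 2) - 1 / t ^ 2) else 0)"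
proof -
  let ?u = "- (t ^ 2) - 1 / t ^ 2"
  have weight: "t ^ 2 / (t ^ 4 - 1) * (t ^ (2 * i) - 1 / t ^ (2 * i)) =
                  (if i = 0 then 0 else chebU (i - 1) (- ?u / 2))" for i
    using weight_eq_chebU [OF assms, of i] by simp
  have "t ^ 2 / (t ^ 4 - 1) * (\<Sum>i=0..n. (t ^ (2 * i) - 1 / t ^ (2 * i)) * poly (stern (n - i)) ?u)
      = (\<Sum>i=0..n. (if i = 0 then 0 else chebU (i - 1) (- ?u / 2)) * poly (stern (n - i)) ?u)"
    unfolding sum_distrib_left by (simp only: mult.assoc [symmetric] weight)
  then show ?thesis
    by (simp only: stern_chebU_shifted_convolution)
qed

theorem theorem3p6:
  fixes n :: nat
  shows "(\<forall>t::real. (\<Sum>i=0..n. poly (stern i) t * chebU (n - i) (- t / 2)) =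
           (if even n then 0 else poly (stern ((n + 1) div 2)) t))
       \<and> (\<forall>t::real. (\<Sum>i=0..n. poly (stern i) t * poly (stern (n - i)) (- t)) =
           (if even n then poly (stern (n div 2)) (2 - t ^ 2) else 0))
       \<and> (\<forall>t::real. t \<noteq> 0 \<longrightarrow> t ^ 4 \<noteq> 1 \<longrightarrow>
           t ^ 2 / (t ^ 4 - 1) *
             (\<Sum>i=0..n. (t ^ (2 * i) - 1 / t ^ (2 * i)) * poly (stern (n - i)) (- (t ^ 2) - 1 / t ^ 2)) =
           (if even n then poly (stern (n div 2)) (- (t ^ 2) - 1 / t ^ 2) else 0))"
  using stern_chebU_convolution stern_self_convolution stern_reciprocal_convolution
  by blast

end
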